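(* Under the setting described in the context, let $\mathcal{K}$ be an arbitrary set of policies. Then \[ M_{1}\cap \mathcal{K}\subseteq \Pi (M_{2}\cap \mathcal{K})\subseteq M_{1}\cap \Pi (\mathcal{K})\subseteq M_{1}. \] In particular, taking $\mathcal{K}$ to be the set of all policies, $\Pi(M_2)=M_1$.
   Context: Let $T\ge 2$, $M\ge 1$ and $n_1,\dots,n_T\ge 1$ be integers. Let $\xi=(\xi_1,\dots,\xi_T)$ be a random vector with values in $\mathbb{R}^{MT}$, $\xi_t\in\mathbb{R}^M$, defined on a probability space $(\Omega,\mathcal{A},\mathbb{P})$, and write $\xi_{1:t}:=(\xi_1,\dots,\xi_t)$. A policy is a tuple $y=(y_t)_{t=1}^T$ where $y_1\in\mathbb{R}^{n_1}$ is deterministic and, for $t\ge 2$, $y_t:\mathbb{R}^{M(t-1)}\to\mathbb{R}^{n_t}$ is Borel measurable; $y_t$ is evaluated at $\xi_{1:t-1}$ (with $y_1(\xi_{1:0}):=y_1$). For $t=1,\dots,T$, $\tau=1,\dots,t$ and $k\in\{2,3\}$ let $A^{(k)}_{t,\tau}$, $B^{(k)}_{t,\tau}$ be given real matrices and $b^{(k)}_t$ given vectors of compatible sizes, with $B^{(3)}_{t,t}=0$ for all $t$. Fix $p\in(0,1]$. Define $M_1$ = set of policies $y$ such that (i) $\mathbb{P}\big(\sum_{\tau=1}^t A^{(2)}_{t,\tau}y_\tau(\xi_{1:\tau-1})+\sum_{\tau=1}^t B^{(2)}_{t,\tau}\xi_\tau\le b^{(2)}_t,\ t=1,\dots,T\big)\ge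 p$ and (ii) $\sum_{\tau=1}^t A^{(3)}_{t,\tau}y_\tau(\xi_{1:\tau-1})+\sum_{\tau=1}^{t-1} B^{(3)}_{t,\tau}\xi_\tau\le b^{(3)}_t$ for $t=1,\dots,T$, $\mathbb{P}$-almost surely; $M_2$ = set of policies $y$ such that $\mathbb{P}\big(\text{for all } t=1,\dots,T:\ \sum_{\tau=1}^t A^{(2)}_{t,\tau}y_\tau(\xi_{1:\tau-1})+\sum_{\tau=1}^t B^{(2)}_{t,\tau}\xi_\tau\le b^{(2)}_t \text{ and } \sum_{\tau=1}^t A^{(3)}_{t,\tau}y_\tau(\xi_{1:\tau-1})+\sum_{\tau=1}^{t-1} B^{(3)}_{t,\tau}\xi_\tau\le b^{(3)}_t\big)\ge p$. For vectors $z_1,\dots,z_{t-1}$ ($z_\tau\in\mathbb{R}^{n_\tau}$) and $\xi_{1:t-1}$ let $X_t(z_{1:t-1},\xi_{1:t-1}):=\{u\in\mathbb{R}^{n_t}: A^{(3)}_{t,t}u\le b^{(3)}_t-\sum_{\tau=1}^{t-1}B^{(3)}_{t,\tau}\xi_\tau-\sum_{\tau=1}^{t-1}A^{(3)}_{t,\tau}z_\tau\}$; it is assumed that all these polyhedra are nonempty, so the Euclidean projection $\pi_{X}$ onto each of them is well defined. The operator $\Pi$ maps a policy $y$ to $z=\Pi(y)$ defined recursively by $z_1:=\pi_{X_1}(y_1)$ and $z_t(\xi_{1:t-1}):=\pi_{X_t(z_1,z_2(\xi_1),\dots,z_{t-1}(\xi_{1:t-2}),\xi_{1:t-1})}(y_t(\xi_{1:t-1}))$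 for every $\xi_{1:t-1}$ and $t=2,\dots,T$; it is assumed that $\Pi(y)$ is again a policy (Borel measurable). For a set $\mathcal{K}$ of policies, $\Pi(\mathcal{K}):=\{\Pi(y):y\in\mathcal{K}\}$. *)

theory Defs
  imports "HOL-Probability.Probability"
begin

text \<open>Time indices t range over 1..T. A vector of R^k is an extensional
function nat => real supported on {..<k}. The noise path is g :: nat => nat => real with
g tau j the j-th component of xi_tau (tau in 1..T, j < M). The history xi_{1:t-1} is the
restriction of g to {1..<t}; R^{M(t-1)} is modelled (with its Borel sigma-algebra) as the
finite product space over {1..<t} of copies of R^M.\<close>

definition vec_space :: "nat \<Rightarrow> (nat \<Rightarrow> real) set" where
  "vec_space k = ({..<k} \<rightarrow>\<^sub>E (UNIV :: real set))"

definition vec_M :: "nat \<Rightarrow> (nat \<Rightarrow> real) measure" where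
  "vec_M k = (\<Pi>\<^sub>M i\<in>{..<k}. (borel :: real measure))"

definition hist_M :: "nat \<Rightarrow> nat \<Rightarrow> (nat \<Rightarrow> nat \<Rightarrow> real) measure" where
  "hist_M M t = (\<Pi>\<^sub>M tau\<in>{1..<t}. vec_M M)"

definition hist :: "(nat \<Rightarrow> nat \<Rightarrow> real) \<Rightarrow> nat \<Rightarrow> (nat \<Rightarrow> nat \<Rightarrow> real)" where
  "hist g t = restrict g {1..<t}"

type_synonym policy = "nat \<Rightarrow> (nat \<Rightarrow> nat \<Rightarrow> real) \<Rightarrow> (nat \<Rightarrow> real)"

text \<open>A policy: y t is a Borel map R^{M(t-1)} -> R^{n_t}; for t = 1 the domain is a
one-point space, so y 1 is a deterministic vector.\<close>
definition is_policy :: "nat \<Rightarrow> nat \<Rightarrow> (nat \<Rightarrow> nat) \<Rightarrow> policy \<Rightarrow> bool" where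
  "is_policy T M n y \<longleftrightarrow> (\<forall>t\<in>{1..T}. y t \<in> hist_M M t \<rightarrow>\<^sub>M vec_M (n t))"

text \<open>A constraint system (k = 2 or k = 3): number of rows m_t, matrices A_{t,tau}
(entries A t tau i j), B_{t,tau} (entries B t tau i j) and right-hand sides b_t (b t i).\<close>
record csys =
  rows :: "nat \<Rightarrow> nat"
  Amat :: "nat \<Rightarrow> nat \<Rightarrow> nat \<Rightarrow> nat \<Rightarrow> real"
  Bmat :: "nat \<Rightarrow> nat \<Rightarrow> nat \<Rightarrow> nat \<Rightarrow> real"
  bvec :: "nat \<Rightarrow> nat \<Rightarrow> real"

definition sat2 :: "nat \<Rightarrow> nat \<Rightarrow> (nat \<Rightarrow> nat) \<Rightarrow> csys \<Rightarrow> policy \<Rightarrow> (nat \<Rightarrow> nat \<Rightarrow> real) \<Rightarrow> bool" where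
  "sat2 T M n C y g \<longleftrightarrow> (\<forall>t\<in>{1..T}. \<forall>i<rows C t.
     (\<Sum>tau\<in>{1..t}. \<Sum>j<n tau. Amat C t tau i j * y tau (hist g tau) j)
     + (\<Sum>tau\<in>{1..t}. \<Sum>j<M. Bmat C t tau i j * g tau j) \<le> bvec C t i)"

definition sat3 :: "nat \<Rightarrow> nat \<Rightarrow> (nat \<Rightarrow> nat) \<Rightarrow> csys \<Rightarrow> policy \<Rightarrow> (nat \<Rightarrow> nat \<Rightarrow> real) \<Rightarrow> bool" where
  "sat3 T M n C y g \<longleftrightarrow> (\<forall>t\<in>{1..T}. \<forall>i<rows C t.
     (\<Sum>tau\<in>{1..t}. \<Sum>j<n tau. Amat C t tau i j * y tau (hist g tau) j)
     + (\<Sum>tau\<in>{1..<t}. \<Sum>j<M. Bmat C t tau i j * g tau j) \<le> bvec C t i)"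

definition M1set :: "nat \<Rightarrow> nat \<Rightarrow> (nat \<Rightarrow> nat) \<Rightarrow> csys \<Rightarrow> csys \<Rightarrow> 'a measure
    \<Rightarrow> ('a \<Rightarrow> nat \<Rightarrow> nat \<Rightarrow> real) \<Rightarrow> real \<Rightarrow> policy set" where
  "M1set T M n C2 C3 P xi p = {y. is_policy T M n y
     \<and> measure P {\<omega> \<in> space P. sat2 T M n C2 y (xi \<omega>)} \<ge> p
     \<and> (AE \<omega> in P. sat3 T M n C3 y (xi \<omega>))}"

definition M2set :: "nat \<Rightarrow> nat \<Rightarrow> (nat \<Rightarrow> nat) \<Rightarrow> csys \<Rightarrow> csys \<Rightarrow> 'a measure
    \<Rightarrow> ('a \<Rightarrow> nat \<Rightarrow> nat \<Rightarrow> real) \<Rightarrow> real \<Rightarrow> policy set" where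
  "M2set T M n C2 C3 P xi p = {y. is_policy T M n y
     \<and> measure P {\<omega> \<in> space P. sat2 T M n C2 y (xi \<omega>) \<and> sat3 T M n C3 y (xi \<omega>)} \<ge> p}"

definition edist :: "nat \<Rightarrow> (nat \<Rightarrow> real) \<Rightarrow> (nat \<Rightarrow> real) \<Rightarrow> real" where
  "edist k u v = sqrt (\<Sum>i<k. (u i - v i)\<^sup>2)"

definition proj :: "nat \<Rightarrow> (nat \<Rightarrow> real) set \<Rightarrow> (nat \<Rightarrow> real) \<Rightarrow> (nat \<Rightarrow> real)" where
  "proj k X u = (THE v. v \<in> X \<and> (\<forall>w\<in>X. edist k v u \<le> edist k w u))"

definition Xset :: "nat \<Rightarrow> (nat \<Rightarrow> nat) \<Rightarrow> csys \<Rightarrow> nat \<Rightarrow> (nat \<Rightarrow> nat \<Rightarrow> real)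
    \<Rightarrow> (nat \<Rightarrow> nat \<Rightarrow> real) \<Rightarrow> (nat \<Rightarrow> real) set" where
  "Xset M n C t z h = {u \<in> vec_space (n t). \<forall>i<rows C t.
     (\<Sum>j<n t. Amat C t t i j * u j) \<le> bvec C t i
       - (\<Sum>tau\<in>{1..<t}. \<Sum>j<M. Bmat C t tau i j * h tau j)
       - (\<Sum>tau\<in>{1..<t}. \<Sum>j<n tau. Amat C t tau i j * z tau j)}"

text \<open>zacc ... y g k tau = z_tau(xi_{1:tau-1}) for tau in 1..k, computed along path g.\<close>
primrec zacc :: "nat \<Rightarrow> (nat \<Rightarrow> nat) \<Rightarrow> csys \<Rightarrow> policy \<Rightarrow> (nat \<Rightarrow> nat \<Rightarrow> real)
    \<Rightarrow> nat \<Rightarrow> nat \<Rightarrow> (nat \<Rightarrow> real)" where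
  "zacc M n C y g 0 = (\<lambda>_. undefined)"
| "zacc M n C y g (Suc k) = (zacc M n C y g k)(Suc k :=
     proj (n (Suc k)) (Xset M n C (Suc k) (zacc M n C y g k) (hist g (Suc k)))
          (y (Suc k) (hist g (Suc k))))"

definition PiOp :: "nat \<Rightarrow> (nat \<Rightarrow> nat) \<Rightarrow> csys \<Rightarrow> policy \<Rightarrow> policy" where
  "PiOp M n C y = (\<lambda>t h. zacc M n C y h t t)"

definition ae_eq_policy :: "nat \<Rightarrow> 'a measure \<Rightarrow> ('a \<Rightarrow> nat \<Rightarrow> nat \<Rightarrow> real)
    \<Rightarrow> policy \<Rightarrow> policy \<Rightarrow> bool" where
  "ae_eq_policy T P xi y z \<longleftrightarrow>
     (\<forall>t\<in>{1..T}. AE \<omega> in P. y t (hist (xi \<omega>) t) = z t (hist (xi \<omega>) t))"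

definition ae_subset :: "nat \<Rightarrow> 'a measure \<Rightarrow> ('a \<Rightarrow> nat \<Rightarrow> nat \<Rightarrow> real)
    \<Rightarrow> policy set \<Rightarrow> policy set \<Rightarrow> bool" where
  "ae_subset T P xi A B \<longleftrightarrow> (\<forall>y\<in>A. \<exists>z\<in>B. ae_eq_policy T P xi y z)"

end

theory Submission
  imports Defs
begin

text \<open>Projecting a decision onto X_t leaves it unchanged if it already meets the hard
constraints of stage t, and always produces one that does. Along every scenario, \<Pi>(y) therefore
meets all hard constraints, and it coincides with y wherever y meets them. For y \<in> M_2 the
chance constraints thus hold for \<Pi>(y) on an event of probability at least p, so \<Pi>(y) \<in> M_1;
for y \<in> M_1 the hard constraints hold almost surely, so y \<in> M_2 and y = \<Pi>(y) almost surely.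
The projection is well defined because a nonempty polyhedron is closed, so a nearest point
exists, and closed under midpoints, so by the parallelogram law it is unique.\<close>

section \<open>Euclidean projection onto polyhedra\<close>

definition polyhedron :: "nat \<Rightarrow> nat \<Rightarrow> (nat \<Rightarrow> nat \<Rightarrow> real) \<Rightarrow> (nat \<Rightarrow> real) \<Rightarrow> (nat \<Rightarrow> real) set"
  where "polyhedron k m a c = {w \<in> vec_space k. \<forall>i<m. (\<Sum>j<k. a i j * w j) \<le> c i}"

lemma topspace_powertop_real_vec [simp]: "topspace (powertop_real {..<k}) = vec_space k"
  by (simp add: vec_space_def)

lemma continuous_map_vec_component:
  "j < k \<Longrightarrow> continuous_map (powertop_real {..<k}) euclideanreal (\<lambda>w. w j)"
  by (intro continuous_map_product_projection) auto

lemma closedin_Collect_all_le: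
  fixes m :: nat
  assumes "\<And>i. i < m \<Longrightarrow> continuous_map X euclideanreal (f i)"
  shows "closedin X {x \<in> topspace X. \<forall>i<m. f i x \<le> c i}"
  using assms
proof (induction m)
  case (Suc m)
  have "{x \<in> topspace X. \<forall>i<Suc m. f i x \<le> c i} =
      {x \<in> topspace X. \<forall>i<m. f i x \<le> c i} \<inter> {x \<in> topspace X. f m x \<in> {..c m}}"
    by (auto simp: less_Suc_eq)
  also have "closedin X \<dots>"
    using Suc by (intro closedin_Int closedin_continuous_map_preimage[where Y = euclideanreal]) auto
  finally show ?case .
qed simp

lemma closedin_polyhedron: "closedin (powertop_real {..<k}) (polyhedron k m a c)"
  unfolding polyhedron_def topspace_powertop_real_vec[symmetric]
  by (intro closedin_Collect_all_le continuous_map_sum continuous_map_real_mult_left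
      continuous_map_vec_component) auto

lemma continuous_map_edist: "continuous_map (powertop_real {..<k}) euclideanreal (\<lambda>w. edist k w u)"
  unfolding edist_def
  by (intro continuous_map_sqrt continuous_map_sum continuous_map_real_pow continuous_map_diff
      continuous_map_vec_component) auto

lemma edist_le_iff: "edist k v u \<le> edist k w u \<longleftrightarrow> (\<Sum>i<k. (v i - u i)\<^sup>2) \<le> (\<Sum>i<k. (w i - u i)\<^sup>2)"
  by (simp add: edist_def)

lemma component_le_edist:
  assumes "j < k"
  shows "\<bar>v j - u j\<bar> \<le> edist k v u"
proof -
  have "\<bar>v j - u j\<bar>\<^sup>2 \<le> (\<Sum>i<k. (v i - u i)\<^sup>2)"
    unfolding power2_abs using assms by (intro member_le_sum) auto
  then show ?thesis
    unfolding edist_def by (rule real_le_rsqrt)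
qed

lemma vec_space_eqI:
  "v \<in> vec_space k \<Longrightarrow> w \<in> vec_space k \<Longrightarrow> (\<And>j. j < k \<Longrightarrow> v j = w j) \<Longrightarrow> v = w"
  unfolding vec_space_def by (auto intro: PiE_ext)

lemma closest_point_exists:
  assumes X: "closedin (powertop_real {..<k}) X" and "w0 \<in> X"
  shows "\<exists>v\<in>X. \<forall>w\<in>X. edist k v u \<le> edist k w u"
proof -
  define r where "r = edist k w0 u"
  define B where "B = (\<Pi>\<^sub>E j\<in>{..<k}. {u j - r .. u j + r})"
  have in_B: "w \<in> B" if "w \<in> X" "\<And>j. j < k \<Longrightarrow> \<bar>w j - u j\<bar> \<le> r" for w
    using that closedin_subset[OF X] by (fastforce simp: B_def vec_space_def PiE_iff abs_le_iff)
  have "compactin (powertop_real {..<k}) (X \<inter> B)"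
    unfolding B_def by (intro closed_Int_compactin X) (simp add: compactin_PiE)
  then have "compact ((\<lambda>w. edist k w u) ` (X \<inter> B))"
    using image_compactin[OF _ continuous_map_edist] by (metis compactin_euclidean_iff)
  moreover have "w0 \<in> X \<inter> B"
    using \<open>w0 \<in> X\<close> in_B component_le_edist r_def by blast
  ultimately obtain v where v: "v \<in> X \<inter> B" "\<forall>w\<in>X \<inter> B. edist k v u \<le> edist k w u"
    using compact_attains_inf[of "(\<lambda>w. edist k w u) ` (X \<inter> B)"] by auto
  have "edist k v u \<le> edist k w u" if "w \<in> X" for w
  proof (cases "w \<in> B")
    case False
    then obtain j where "j < k" "r < \<bar>w j - u j\<bar>"
      using in_B \<open>w \<in> X\<close> by (meson not_le)
    then have "edist k w0 u < edist k w u"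
      using component_le_edist r_def by (metis order.strict_trans2)
    then show ?thesis
      using v \<open>w0 \<in> X \<inter> B\<close> by (meson le_less_trans less_le_not_le)
  qed (use v that in auto)
  then show ?thesis using v by blast
qed

lemma closest_point_unique:
  assumes sub: "X \<subseteq> vec_space k"
    and midpoint: "\<And>v w. v \<in> X \<Longrightarrow> w \<in> X \<Longrightarrow> (\<lambda>i. (v i + w i) / 2) \<in> X"
    and v: "v \<in> X" "\<forall>x\<in>X. edist k v u \<le> edist k x u"
    and w: "w \<in> X" "\<forall>x\<in>X. edist k w u \<le> edist k x u"
  shows "v = w"
proof -
  define sq where "sq x = (\<Sum>i<k. (x i - u i)\<^sup>2)" for x
  define m where "m = (\<lambda>i. (v i + w i) / 2)"
  have "sq v = sq w"
    using v w by (simp add: sq_def edist_le_iff order_antisym)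
  moreover have "sq v \<le> sq m"
    using v midpoint[OF v(1) w(1)] by (simp add: sq_def m_def edist_le_iff)
  moreover have "sq m = (sq v + sq w) / 2 - (\<Sum>i<k. (v i - w i)\<^sup>2) / 4"
    \<comment> \<open>parallelogram law\<close>
  proof -
    have "sq m = (\<Sum>i<k. ((v i - u i)\<^sup>2 + (w i - u i)\<^sup>2) / 2 - (v i - w i)\<^sup>2 / 4)"
      unfolding sq_def m_def by (intro sum.cong refl) (simp add: power2_eq_square field_simps)
    then show ?thesis
      by (simp add: sq_def sum_subtractf sum_divide_distrib[symmetric] sum.distrib)
  qed
  ultimately have "(\<Sum>i<k. (v i - w i)\<^sup>2) = 0"
    by (simp add: order_antisym sum_nonneg)
  then have "\<forall>i<k. v i = w i"
    by (subst (asm) sum_nonneg_eq_0_iff) auto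
  then show ?thesis
    using sub v w by (intro vec_space_eqI) auto
qed

lemma polyhedron_subset_vec_space: "polyhedron k m a c \<subseteq> vec_space k"
  by (simp add: polyhedron_def)

lemma polyhedron_midpoint:
  assumes "v \<in> polyhedron k m a c" "w \<in> polyhedron k m a c"
  shows "(\<lambda>i. (v i + w i) / 2) \<in> polyhedron k m a c"
proof -
  have "(\<Sum>j<k. a i j * ((v j + w j) / 2)) \<le> c i" if "i < m" for i
  proof -
    have "(\<Sum>j<k. a i j * ((v j + w j) / 2)) = ((\<Sum>j<k. a i j * v j) + (\<Sum>j<k. a i j * w j)) / 2"
      by (simp add: sum_divide_distrib[symmetric] sum.distrib[symmetric] algebra_simps)
    moreover have "(\<Sum>j<k. a i j * v j) \<le> c i" "(\<Sum>j<k. a i j * w j) \<le> c i"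
      using assms that by (auto simp: polyhedron_def)
    ultimately show ?thesis by argo
  qed
  moreover have "(\<lambda>i. (v i + w i) / 2) \<in> vec_space k"
    \<comment> \<open>off {..<k} both points are \<open>undefined\<close>, and (x + x) / 2 = x\<close>
    using assms by (auto simp: polyhedron_def vec_space_def PiE_def extensional_def)
  ultimately show ?thesis
    by (simp add: polyhedron_def)
qed

lemma proj_polyhedron_eqI:
  assumes "v \<in> polyhedron k m a c" "\<forall>x\<in>polyhedron k m a c. edist k v u \<le> edist k x u"
  shows "proj k (polyhedron k m a c) u = v"
  unfolding proj_def
proof (rule the_equality)
  fix w assume w: "w \<in> polyhedron k m a c \<and> (\<forall>x\<in>polyhedron k m a c. edist k w u \<le> edist k x u)"
  show "w = v"
    by (rule closest_point_unique[OF polyhedron_subset_vec_space polyhedron_midpoint])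
      (use w assms in auto)
qed (use assms in blast)

lemma proj_in_polyhedron:
  "polyhedron k m a c \<noteq> {} \<Longrightarrow> proj k (polyhedron k m a c) u \<in> polyhedron k m a c"
  using closest_point_exists[OF closedin_polyhedron] proj_polyhedron_eqI by (metis ex_in_conv)

lemma proj_polyhedron_self: "u \<in> polyhedron k m a c \<Longrightarrow> proj k (polyhedron k m a c) u = u"
  by (rule proj_polyhedron_eqI) (auto simp: edist_def intro: sum_nonneg)

section \<open>The operator \<Pi> along a noise path\<close>

lemma Xset_eq_polyhedron:
  "Xset M n C t z h = polyhedron (n t) (rows C t) (Amat C t t)
     (\<lambda>i. bvec C t i - (\<Sum>tau\<in>{1..<t}. \<Sum>j<M. Bmat C t tau i j * h tau j)
                     - (\<Sum>tau\<in>{1..<t}. \<Sum>j<n tau. Amat C t tau i j * z tau j))"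
  by (simp add: Xset_def polyhedron_def)

lemma Xset_subset_vec_space: "Xset M n C t z h \<subseteq> vec_space (n t)"
  by (simp add: Xset_def)

lemma Xset_cong:
  assumes "\<And>tau. tau \<in> {1..<t} \<Longrightarrow> z tau = z' tau"
  shows "Xset M n C t z h = Xset M n C t z' h"
proof -
  have "(\<Sum>tau\<in>{1..<t}. \<Sum>j<n tau. Amat C t tau i j * z tau j)
      = (\<Sum>tau\<in>{1..<t}. \<Sum>j<n tau. Amat C t tau i j * z' tau j)" for i
    using assms by (intro sum.cong) auto
  then show ?thesis by (simp add: Xset_def)
qed

definition decisions :: "policy \<Rightarrow> (nat \<Rightarrow> nat \<Rightarrow> real) \<Rightarrow> nat \<Rightarrow> nat \<Rightarrow> real"
  where "decisions y g tau = y tau (hist g tau)"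

definition noise_path :: "nat \<Rightarrow> nat \<Rightarrow> (nat \<Rightarrow> nat \<Rightarrow> real) \<Rightarrow> bool"
  where "noise_path T M g \<longleftrightarrow> (\<forall>tau\<in>{1..T}. g tau \<in> vec_space M)"

lemma hist_hist: "tau \<le> t \<Longrightarrow> hist (hist g t) tau = hist g tau"
  by (auto simp: hist_def fun_eq_iff)

lemma hist_apply: "tau \<in> {1..<t} \<Longrightarrow> hist g t tau = g tau"
  by (simp add: hist_def)

lemma space_vec_M: "space (vec_M k) = vec_space k"
  by (simp add: vec_M_def vec_space_def space_PiM)

lemma hist_in_space:
  "noise_path T M g \<Longrightarrow> t \<le> T \<Longrightarrow> hist g t \<in> space (hist_M M t)"
  by (auto simp: noise_path_def hist_M_def hist_def space_PiM space_vec_M)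

lemma decisions_in_vec_space:
  assumes "is_policy T M n y" "noise_path T M g" "t \<in> {1..T}"
  shows "decisions y g t \<in> vec_space (n t)"
proof -
  have "y t \<in> hist_M M t \<rightarrow>\<^sub>M vec_M (n t)"
    using assms(1,3) by (simp add: is_policy_def)
  moreover have "hist g t \<in> space (hist_M M t)"
    using hist_in_space[OF assms(2)] assms(3) by simp
  ultimately show ?thesis
    unfolding decisions_def space_vec_M[symmetric] by (rule measurable_space)
qed

lemma sat2_cong:
  assumes "\<And>t. t \<in> {1..T} \<Longrightarrow> decisions y g t = decisions z g t"
  shows "sat2 T M n C y g = sat2 T M n C z g"
proof -
  have "(\<Sum>tau\<in>{1..t}. \<Sum>j<n tau. Amat C t tau i j * y tau (hist g tau) j)
      = (\<Sum>tau\<in>{1..t}. \<Sum>j<n tau. Amat C t tau i j * z tau (hist g tau) j)" if "t \<in> {1..T}" for t i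
    using assms that by (intro sum.cong) (auto simp: decisions_def)
  then show ?thesis
    unfolding sat2_def by (intro ball_cong refl) simp
qed

text \<open>Here B^(3)_{t,t} = 0 is built in: sat3 only sums the noise up to stage t - 1.\<close>

lemma sat3_iff_mem_Xset:
  assumes vec: "\<And>t. t \<in> {1..T} \<Longrightarrow> decisions y g t \<in> vec_space (n t)"
  shows "sat3 T M n C y g \<longleftrightarrow>
    (\<forall>t\<in>{1..T}. decisions y g t \<in> Xset M n C t (decisions y g) (hist g t))"
proof -
  have row: "(\<Sum>tau\<in>{1..t}. \<Sum>j<n tau. Amat C t tau i j * y tau (hist g tau) j)
        + (\<Sum>tau\<in>{1..<t}. \<Sum>j<M. Bmat C t tau i j * g tau j) \<le> bvec C t i
    \<longleftrightarrow> (\<Sum>j<n t. Amat C t t i j * y t (hist g t) j) \<le> bvec C t i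
        - (\<Sum>tau\<in>{1..<t}. \<Sum>j<M. Bmat C t tau i j * hist g t tau j)
        - (\<Sum>tau\<in>{1..<t}. \<Sum>j<n tau. Amat C t tau i j * y tau (hist g tau) j)"
    if "t \<in> {1..T}" for t i
  proof -
    have "(\<Sum>tau\<in>{1..<t}. \<Sum>j<M. Bmat C t tau i j * hist g t tau j)
        = (\<Sum>tau\<in>{1..<t}. \<Sum>j<M. Bmat C t tau i j * g tau j)"
      by (intro sum.cong) (auto simp: hist_apply)
    moreover have "(\<Sum>tau\<in>{1..t}. \<Sum>j<n tau. Amat C t tau i j * y tau (hist g tau) j)
        = (\<Sum>j<n t. Amat C t t i j * y t (hist g t) j)
          + (\<Sum>tau\<in>{1..<t}. \<Sum>j<n tau. Amat C t tau i j * y tau (hist g tau) j)"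
      using that by (intro sum.last_plus) simp
    ultimately show ?thesis
      by argo
  qed
  have "(\<forall>i<rows C t. (\<Sum>tau\<in>{1..t}. \<Sum>j<n tau. Amat C t tau i j * y tau (hist g tau) j)
        + (\<Sum>tau\<in>{1..<t}. \<Sum>j<M. Bmat C t tau i j * g tau j) \<le> bvec C t i)
    \<longleftrightarrow> decisions y g t \<in> Xset M n C t (decisions y g) (hist g t)" if "t \<in> {1..T}" for t
    using row[OF that] vec[OF that] unfolding Xset_def decisions_def by blast
  then show ?thesis
    unfolding sat3_def by blast
qed

lemma zacc_stable: "tau \<le> k \<Longrightarrow> zacc M n C y g k tau = zacc M n C y g tau tau"
  by (induction k) (auto simp: le_Suc_eq)

lemma zacc_hist: "k \<le> t \<Longrightarrow> zacc M n C y (hist g t) k = zacc M n C y g k"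
  by (induction k) (auto simp: hist_hist)

lemma zacc_Suc_self:
  "zacc M n C y g (Suc k) (Suc k) =
     proj (n (Suc k)) (Xset M n C (Suc k) (zacc M n C y g k) (hist g (Suc k))) (y (Suc k) (hist g (Suc k)))"
  by (simp only: zacc.simps fun_upd_same)

lemma decisions_PiOp: "decisions (PiOp M n C y) g t = zacc M n C y g t t"
  by (simp add: decisions_def PiOp_def zacc_hist)

lemma zacc_mem_Xset:
  assumes ne: "\<forall>t\<in>{1..T}. \<forall>z h. (\<forall>tau\<in>{1..<t}. z tau \<in> vec_space (n tau))
           \<longrightarrow> h \<in> space (hist_M M t) \<longrightarrow> Xset M n C t z h \<noteq> {}"
    and g: "noise_path T M g"
  shows "t \<in> {1..T} \<Longrightarrow> zacc M n C y g t t \<in> Xset M n C t (zacc M n C y g (t - 1)) (hist g t)"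
proof (induction t rule: less_induct)
  case (less t)
  then obtain k where t: "t = Suc k" by (cases t) auto
  have "zacc M n C y g k tau \<in> vec_space (n tau)" if tau: "tau \<in> {1..<t}" for tau
  proof -
    have "zacc M n C y g tau tau \<in> Xset M n C tau (zacc M n C y g (tau - 1)) (hist g tau)"
      by (rule less.IH) (use tau less.prems in auto)
    moreover have "zacc M n C y g k tau = zacc M n C y g tau tau"
      using tau t by (intro zacc_stable) simp
    ultimately show ?thesis
      using Xset_subset_vec_space by (metis subsetD)
  qed
  moreover have "hist g t \<in> space (hist_M M t)"
    using hist_in_space[OF g] less.prems by simp
  ultimately have "Xset M n C t (zacc M n C y g k) (hist g t) \<noteq> {}"
    using bspec[OF ne less.prems] by simp
  then have "proj (n t) (Xset M n C t (zacc M n C y g k) (hist g t)) u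
      \<in> Xset M n C t (zacc M n C y g k) (hist g t)" for u
    unfolding Xset_eq_polyhedron by (rule proj_in_polyhedron)
  then show ?case
    unfolding t by (simp only: zacc_Suc_self diff_Suc_1)
qed

lemma sat3_PiOp:
  assumes ne: "\<forall>t\<in>{1..T}. \<forall>z h. (\<forall>tau\<in>{1..<t}. z tau \<in> vec_space (n tau))
           \<longrightarrow> h \<in> space (hist_M M t) \<longrightarrow> Xset M n C t z h \<noteq> {}"
    and g: "noise_path T M g"
  shows "sat3 T M n C (PiOp M n C y) g"
proof -
  have "decisions (PiOp M n C y) g t \<in> Xset M n C t (decisions (PiOp M n C y) g) (hist g t)"
    if "t \<in> {1..T}" for t
  proof -
    have "Xset M n C t (zacc M n C y g (t - 1)) (hist g t)
        = Xset M n C t (decisions (PiOp M n C y) g) (hist g t)"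
    proof (rule Xset_cong)
      fix tau assume "tau \<in> {1..<t}"
      then show "zacc M n C y g (t - 1) tau = decisions (PiOp M n C y) g tau"
        unfolding decisions_PiOp by (intro zacc_stable) auto
    qed
    then show ?thesis
      using zacc_mem_Xset[OF ne g that, where y = y] by (simp add: decisions_PiOp)
  qed
  moreover from this have "decisions (PiOp M n C y) g t \<in> vec_space (n t)" if "t \<in> {1..T}" for t
    using that Xset_subset_vec_space by blast
  ultimately show ?thesis
    using sat3_iff_mem_Xset[of T "PiOp M n C y" g n M C] by blast
qed

text \<open>On a path where y already meets the hard constraints, each projection is a no-op.\<close>
lemma decisions_PiOp_eq:
  assumes y: "is_policy T M n y" and g: "noise_path T M g" and sat: "sat3 T M n C y g"
  shows "t \<in> {1..T} \<Longrightarrow> decisions (PiOp M n C y) g t = decisions y g t"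
proof (induction t rule: less_induct)
  case (less t)
  then obtain k where t: "t = Suc k" by (cases t) auto
  have "zacc M n C y g k tau = decisions y g tau" if tau: "tau \<in> {1..<t}" for tau
  proof -
    have "zacc M n C y g k tau = decisions (PiOp M n C y) g tau"
      unfolding decisions_PiOp using tau t by (intro zacc_stable) simp
    also have "\<dots> = decisions y g tau"
      using tau less.prems by (intro less.IH) auto
    finally show ?thesis .
  qed
  then have "Xset M n C t (zacc M n C y g k) (hist g t) = Xset M n C t (decisions y g) (hist g t)"
    by (rule Xset_cong)
  moreover have "decisions y g t \<in> Xset M n C t (decisions y g) (hist g t)"
    using sat sat3_iff_mem_Xset[of T y g n M C] decisions_in_vec_space[OF y g] less.prems by blast
  ultimately have "proj (n t) (Xset M n C t (zacc M n C y g k) (hist g t)) (decisions y g t)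
      = decisions y g t"
    by (simp add: Xset_eq_polyhedron proj_polyhedron_self)
  then show ?case
    unfolding t decisions_PiOp zacc_Suc_self by (simp only: decisions_def)
qed

section \<open>Measurability of the constraint events\<close>

lemma measurable_noise_stage:
  assumes "xi \<in> P \<rightarrow>\<^sub>M (\<Pi>\<^sub>M tau\<in>{1..T}. vec_M M)" "tau \<in> {1..T}"
  shows "(\<lambda>\<omega>. xi \<omega> tau) \<in> P \<rightarrow>\<^sub>M vec_M M"
  using measurable_compose[OF assms(1) measurable_component_singleton[OF assms(2)]] by simp

lemma measurable_vec_component: "j < k \<Longrightarrow> (\<lambda>x. x j) \<in> vec_M k \<rightarrow>\<^sub>M borel"
  unfolding vec_M_def by (rule measurable_component_singleton) auto

lemma borel_measurable_noise:
  assumes "xi \<in> P \<rightarrow>\<^sub>M (\<Pi>\<^sub>M tau\<in>{1..T}. vec_M M)" "tau \<in> {1..T}" "j < M"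
  shows "(\<lambda>\<omega>. xi \<omega> tau j) \<in> borel_measurable P"
  using measurable_compose[OF measurable_noise_stage measurable_vec_component] assms by simp

lemma borel_measurable_decisions:
  assumes y: "is_policy T M n y" and xi: "xi \<in> P \<rightarrow>\<^sub>M (\<Pi>\<^sub>M tau\<in>{1..T}. vec_M M)"
    and t: "t \<in> {1..T}" and j: "j < n t"
  shows "(\<lambda>\<omega>. decisions y (xi \<omega>) t j) \<in> borel_measurable P"
proof -
  have "(\<lambda>\<omega>. hist (xi \<omega>) t) \<in> P \<rightarrow>\<^sub>M hist_M M t"
    unfolding hist_def hist_M_def
    by (rule measurable_restrict, rule measurable_noise_stage[OF xi]) (use t in auto)
  then have "(\<lambda>\<omega>. y t (hist (xi \<omega>) t)) \<in> P \<rightarrow>\<^sub>M vec_M (n t)"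
    using measurable_compose y t unfolding is_policy_def by blast
  from measurable_compose[OF this measurable_vec_component[OF j]]
  show ?thesis by (simp add: decisions_def)
qed

lemma sets_sat:
  assumes y: "is_policy T M n y" and xi: "xi \<in> P \<rightarrow>\<^sub>M (\<Pi>\<^sub>M tau\<in>{1..T}. vec_M M)"
  shows "{\<omega>\<in>space P. sat2 T M n C y (xi \<omega>)} \<in> sets P"
    and "{\<omega>\<in>space P. sat3 T M n C y (xi \<omega>)} \<in> sets P"
proof -
  have A: "(\<lambda>\<omega>. \<Sum>tau\<in>{1..t}. \<Sum>j<n tau. Amat C t tau i j * decisions y (xi \<omega>) tau j)
      \<in> borel_measurable P" if "t \<in> {1..T}" for t i
    using that by (intro borel_measurable_sum borel_measurable_times borel_measurable_const
        borel_measurable_decisions[OF y xi]) auto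
  have B: "(\<lambda>\<omega>. \<Sum>tau\<in>S. \<Sum>j<M. Bmat C t tau i j * xi \<omega> tau j) \<in> borel_measurable P"
    if "S \<subseteq> {1..T}" for S t i
    using that by (intro borel_measurable_sum borel_measurable_times borel_measurable_const
        borel_measurable_noise[OF xi]) auto
  have "{\<omega>\<in>space P. sat2 T M n C y (xi \<omega>)} = {\<omega>\<in>space P. \<forall>t\<in>{1..T}. \<forall>i\<in>{..<rows C t}.
      (\<Sum>tau\<in>{1..t}. \<Sum>j<n tau. Amat C t tau i j * decisions y (xi \<omega>) tau j)
      + (\<Sum>tau\<in>{1..t}. \<Sum>j<M. Bmat C t tau i j * xi \<omega> tau j) \<le> bvec C t i}"
    by (auto simp: sat2_def decisions_def)
  also have "\<dots> \<in> sets P"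
    by (intro sets.sets_Collect_finite_All borel_measurable_le borel_measurable_add A B
        borel_measurable_const) auto
  finally show "{\<omega>\<in>space P. sat2 T M n C y (xi \<omega>)} \<in> sets P" .
  have "{\<omega>\<in>space P. sat3 T M n C y (xi \<omega>)} = {\<omega>\<in>space P. \<forall>t\<in>{1..T}. \<forall>i\<in>{..<rows C t}.
      (\<Sum>tau\<in>{1..t}. \<Sum>j<n tau. Amat C t tau i j * decisions y (xi \<omega>) tau j)
      + (\<Sum>tau\<in>{1..<t}. \<Sum>j<M. Bmat C t tau i j * xi \<omega> tau j) \<le> bvec C t i}"
    by (auto simp: sat3_def decisions_def)
  also have "\<dots> \<in> sets P"
    by (intro sets.sets_Collect_finite_All borel_measurable_le borel_measurable_add A B
        borel_measurable_const) auto
  finally show "{\<omega>\<in>space P. sat3 T M n C y (xi \<omega>)} \<in> sets P" .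
qed

lemma noise_path_random:
  assumes "xi \<in> P \<rightarrow>\<^sub>M (\<Pi>\<^sub>M tau\<in>{1..T}. vec_M M)" "\<omega> \<in> space P"
  shows "noise_path T M (xi \<omega>)"
proof -
  have "xi \<omega> \<in> space (\<Pi>\<^sub>M tau\<in>{1..T}. vec_M M)"
    by (rule measurable_space) (fact assms)+
  then show ?thesis
    by (auto simp: noise_path_def space_PiM space_vec_M)
qed

section \<open>Comparing M_1 and M_2\<close>

lemma PiOp_M2set_subset_M1set:
  assumes P: "prob_space P"
    and xi: "xi \<in> P \<rightarrow>\<^sub>M (\<Pi>\<^sub>M tau\<in>{1..T}. vec_M M)"
    and ne: "\<forall>t\<in>{1..T}. \<forall>z h. (\<forall>tau\<in>{1..<t}. z tau \<in> vec_space (n tau))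
           \<longrightarrow> h \<in> space (hist_M M t) \<longrightarrow> Xset M n C3 t z h \<noteq> {}"
    and pol: "\<forall>y. is_policy T M n y \<longrightarrow> is_policy T M n (PiOp M n C3 y)"
  shows "PiOp M n C3 ` M2set T M n C2 C3 P xi p \<subseteq> M1set T M n C2 C3 P xi p"
proof
  interpret prob_space P by (rule P)
  fix z assume "z \<in> PiOp M n C3 ` M2set T M n C2 C3 P xi p"
  then obtain y where z: "z = PiOp M n C3 y" and "y \<in> M2set T M n C2 C3 P xi p" by blast
  then have y: "is_policy T M n y"
    and py: "p \<le> measure P {\<omega> \<in> space P. sat2 T M n C2 y (xi \<omega>) \<and> sat3 T M n C3 y (xi \<omega>)}"
    by (auto simp: M2set_def)
  have z_pol: "is_policy T M n z"
    using pol y z by blast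
  have "{\<omega> \<in> space P. sat2 T M n C2 y (xi \<omega>) \<and> sat3 T M n C3 y (xi \<omega>)}
      \<subseteq> {\<omega> \<in> space P. sat2 T M n C2 z (xi \<omega>)}"
  proof safe
    fix \<omega> assume \<omega>: "\<omega> \<in> space P" "sat2 T M n C2 y (xi \<omega>)" "sat3 T M n C3 y (xi \<omega>)"
    have "sat2 T M n C2 z (xi \<omega>) = sat2 T M n C2 y (xi \<omega>)"
      by (rule sat2_cong)
        (use decisions_PiOp_eq[OF y noise_path_random[OF xi \<omega>(1)] \<omega>(3)] z in simp)
    with \<omega>(2) show "sat2 T M n C2 z (xi \<omega>)" by simp
  qed
  then have "p \<le> measure P {\<omega> \<in> space P. sat2 T M n C2 z (xi \<omega>)}"
    using py finite_measure_mono sets_sat(1)[OF z_pol xi] by (meson order_trans)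
  moreover have "AE \<omega> in P. sat3 T M n C3 z (xi \<omega>)"
    unfolding z using sat3_PiOp[OF ne noise_path_random[OF xi]] by simp
  ultimately show "z \<in> M1set T M n C2 C3 P xi p"
    using z_pol by (simp add: M1set_def)
qed

lemma M1set_subset_M2set:
  assumes xi: "xi \<in> P \<rightarrow>\<^sub>M (\<Pi>\<^sub>M tau\<in>{1..T}. vec_M M)"
  shows "M1set T M n C2 C3 P xi p \<subseteq> M2set T M n C2 C3 P xi p"
proof
  fix y assume "y \<in> M1set T M n C2 C3 P xi p"
  then have y: "is_policy T M n y"
    and py: "p \<le> measure P {\<omega> \<in> space P. sat2 T M n C2 y (xi \<omega>)}"
    and ae: "AE \<omega> in P. sat3 T M n C3 y (xi \<omega>)"
    by (auto simp: M1set_def)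
  have "measure P {\<omega> \<in> space P. sat2 T M n C2 y (xi \<omega>) \<and> sat3 T M n C3 y (xi \<omega>)}
      = measure P {\<omega> \<in> space P. sat2 T M n C2 y (xi \<omega>)}"
    using ae sets_sat[OF y xi] by (intro measure_eq_AE) auto
  then show "y \<in> M2set T M n C2 C3 P xi p"
    using py y by (simp add: M2set_def)
qed

lemma ae_eq_policy_PiOp:
  assumes xi: "xi \<in> P \<rightarrow>\<^sub>M (\<Pi>\<^sub>M tau\<in>{1..T}. vec_M M)" and "y \<in> M1set T M n C2 C3 P xi p"
  shows "ae_eq_policy T P xi y (PiOp M n C3 y)"
  unfolding ae_eq_policy_def
proof
  fix t assume t: "t \<in> {1..T}"
  have y: "is_policy T M n y" and ae: "AE \<omega> in P. sat3 T M n C3 y (xi \<omega>)"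
    using assms(2) by (auto simp: M1set_def)
  from ae AE_space show "AE \<omega> in P. y t (hist (xi \<omega>) t) = PiOp M n C3 y t (hist (xi \<omega>) t)"
  proof eventually_elim
    case (elim \<omega>)
    then show ?case
      using decisions_PiOp_eq[OF y noise_path_random[OF xi elim(2)] elim(1) t]
      by (simp add: decisions_def)
  qed
qed

theorem lemma2p1:
  fixes T M :: nat and n :: "nat \<Rightarrow> nat" and C2 C3 :: csys
    and P :: "'a measure" and xi :: "'a \<Rightarrow> nat \<Rightarrow> nat \<Rightarrow> real" and p :: real
    and K :: "policy set"
  assumes "T \<ge> 2" and "M \<ge> 1" and "\<forall>t\<in>{1..T}. n t \<ge> 1"
    and "prob_space P"
    and "xi \<in> P \<rightarrow>\<^sub>M (\<Pi>\<^sub>M tau\<in>{1..T}. vec_M M)"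
    and "\<forall>t\<in>{1..T}. \<forall>i<rows C3 t. \<forall>j<M. Bmat C3 t t i j = 0"
    and "0 < p" and "p \<le> 1"
    and "\<forall>t\<in>{1..T}. \<forall>z h. (\<forall>tau\<in>{1..<t}. z tau \<in> vec_space (n tau))
           \<longrightarrow> h \<in> space (hist_M M t) \<longrightarrow> Xset M n C3 t z h \<noteq> {}"
    and "\<forall>y. is_policy T M n y \<longrightarrow> is_policy T M n (PiOp M n C3 y)"
    and "K \<subseteq> {y. is_policy T M n y}"
  shows "ae_subset T P xi (M1set T M n C2 C3 P xi p \<inter> K)
            (PiOp M n C3 ` (M2set T M n C2 C3 P xi p \<inter> K))
       \<and> PiOp M n C3 ` (M2set T M n C2 C3 P xi p \<inter> K)
            \<subseteq> M1set T M n C2 C3 P xi p \<inter> PiOp M n C3 ` K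
       \<and> M1set T M n C2 C3 P xi p \<inter> PiOp M n C3 ` K \<subseteq> M1set T M n C2 C3 P xi p
       \<and> PiOp M n C3 ` M2set T M n C2 C3 P xi p \<subseteq> M1set T M n C2 C3 P xi p
       \<and> ae_subset T P xi (M1set T M n C2 C3 P xi p) (PiOp M n C3 ` M2set T M n C2 C3 P xi p)"
proof -
  have PiOp_M2: "PiOp M n C3 ` M2set T M n C2 C3 P xi p \<subseteq> M1set T M n C2 C3 P xi p"
    using PiOp_M2set_subset_M1set assms(4,5,9,10) .
  have "ae_subset T P xi (M1set T M n C2 C3 P xi p \<inter> L)
      (PiOp M n C3 ` (M2set T M n C2 C3 P xi p \<inter> L))" for L
    using M1set_subset_M2set[OF assms(5)] ae_eq_policy_PiOp[OF assms(5)]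
    unfolding ae_subset_def by blast
  from this[of K] this[of UNIV] PiOp_M2 show ?thesis
    by (intro conjI) (auto intro: image_mono)
qed

end
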